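(* If \(A\subseteq\operatorname{Homeo}_+(I)\) is a finite geometrically proper set of positive bump functions, then the following are equivalent: (1) \(A\) is geometrically fast; (2) every stretched transition chain \(C\) of \(A\) satisfies \(C_{\max}\le C_{\min}\prod C\); (3) every maximal stretched transition chain \(C\) of \(A\) satisfies \(C_{\max}\le C_{\min}\prod C\).
   Context: \(I=[0,1]\); homeomorphisms act on the right (\(tg\) is the image of \(t\); \(fg\) means apply \(f\) first). A positive bump is an element of \(\operatorname{Homeo}_+(I)\) whose support \(\{t: ta\neq t\}\) is a single open interval \((x,y)\) on which \(ta>t\); its transition points are \(x\) (left) and \(y\) (right). A transition point of \(A\) is one of some element of \(A\). \(A\) is geometrically proper if no point is a left transition point of two distinct elements, nor a right transition point of two distinct elements. A marking of \(A\) assigns each \(a\) a marker \(t\in\operatorname{supt}(a)\); for \(a\) with support \((x,y)\) its feet are \((x,t)\) and \([ta,y)\). \(A\) is geometrically fast if geometrically proper and some marking makes all feet pairwise disjoint. An element of \(A\) is isolated if its support contains no transition point of \(A\). A sequence \(C=(a_i\mid i\le k)\) of nonisolated elements of \(A\), \(\operatorname{supt}(a_i)=(x_i,y_i)\), is a stretched transition chain if for all \(i<k\), \(x_i<x_{i+1}<y_i<y_{i+1}\), and no transition point of \(A\) lies in any \((x_{i+1},y_i)\); maximal means maximal under containment as a subset of \(A\). \(\prod C=a_0a_1\cdots a_k\); \(C_{\min}\) (resp. \(C_{\max}\)) is the least (resp. greatest) transition point of \(A\) lying in the union of the supports of the elements of \(C\). *)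

theory Defs
  imports Complex_Main
begin

text \<open>Homeomorphisms act on the right: t g is written g t. The composite f g (apply f
first) is the function g \<circ> f. Elements of Homeo_+(I) are represented as functions
real \<Rightarrow> real that are the identity outside I = [0,1].\<close>

definition homeo_plus :: "(real \<Rightarrow> real) \<Rightarrow> bool" where
  "homeo_plus f \<longleftrightarrow> bij_betw f {0..1} {0..1} \<and> continuous_on {0..1} f
     \<and> strict_mono_on {0..1} f \<and> (\<forall>x. x \<notin> {0..1} \<longrightarrow> f x = x)"

definition supt :: "(real \<Rightarrow> real) \<Rightarrow> real set" where
  "supt f = {t. f t \<noteq> t}"

definition positive_bump :: "(real \<Rightarrow> real) \<Rightarrow> bool" where
  "positive_bump a \<longleftrightarrow> homeo_plus a \<and>
     (\<exists>x y. x < y \<and> supt a = {x<..<y} \<and> (\<forall>t\<in>{x<..<y}. a t > t))"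

definition left_tp :: "(real \<Rightarrow> real) \<Rightarrow> real" where
  "left_tp a = Inf (supt a)"

definition right_tp :: "(real \<Rightarrow> real) \<Rightarrow> real" where
  "right_tp a = Sup (supt a)"

definition trans_points :: "(real \<Rightarrow> real) set \<Rightarrow> real set" where
  "trans_points A = left_tp ` A \<union> right_tp ` A"

definition geom_proper :: "(real \<Rightarrow> real) set \<Rightarrow> bool" where
  "geom_proper A \<longleftrightarrow>
     (\<forall>a\<in>A. \<forall>b\<in>A. left_tp a = left_tp b \<longrightarrow> a = b) \<and>
     (\<forall>a\<in>A. \<forall>b\<in>A. right_tp a = right_tp b \<longrightarrow> a = b)"

definition left_foot :: "((real \<Rightarrow> real) \<Rightarrow> real) \<Rightarrow> (real \<Rightarrow> real) \<Rightarrow> real set" where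
  "left_foot m a = {left_tp a<..<m a}"

definition right_foot :: "((real \<Rightarrow> real) \<Rightarrow> real) \<Rightarrow> (real \<Rightarrow> real) \<Rightarrow> real set" where
  "right_foot m a = {a (m a)..<right_tp a}"

definition geom_fast :: "(real \<Rightarrow> real) set \<Rightarrow> bool" where
  "geom_fast A \<longleftrightarrow> geom_proper A \<and>
     (\<exists>m. (\<forall>a\<in>A. m a \<in> supt a) \<and>
        (\<forall>a\<in>A. \<forall>b\<in>A.
           left_foot m a \<inter> right_foot m b = {} \<and>
           (a \<noteq> b \<longrightarrow> left_foot m a \<inter> left_foot m b = {}) \<and>
           (a \<noteq> b \<longrightarrow> right_foot m a \<inter> right_foot m b = {})))"

definition isolated :: "(real \<Rightarrow> real) set \<Rightarrow> (real \<Rightarrow> real) \<Rightarrow> bool" where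
  "isolated A a \<longleftrightarrow> supt a \<inter> trans_points A = {}"

definition stretched_chain :: "(real \<Rightarrow> real) set \<Rightarrow> (real \<Rightarrow> real) list \<Rightarrow> bool" where
  "stretched_chain A C \<longleftrightarrow> C \<noteq> [] \<and> (\<forall>a\<in>set C. a \<in> A \<and> \<not> isolated A a) \<and>
     (\<forall>i. Suc i < length C \<longrightarrow>
        left_tp (C!i) < left_tp (C!Suc i) \<and> left_tp (C!Suc i) < right_tp (C!i) \<and>
        right_tp (C!i) < right_tp (C!Suc i) \<and>
        trans_points A \<inter> {left_tp (C!Suc i)<..<right_tp (C!i)} = {})"

definition max_stretched_chain :: "(real \<Rightarrow> real) set \<Rightarrow> (real \<Rightarrow> real) list \<Rightarrow> bool" where
  "max_stretched_chain A C \<longleftrightarrow> stretched_chain A C \<and>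
     (\<forall>D. stretched_chain A D \<and> set C \<subseteq> set D \<longrightarrow> set D = set C)"

text \<open>\<Prod>C = a_0 a_1 ... a_k: apply a_0 first, then a_1, etc.\<close>
definition chain_prod :: "(real \<Rightarrow> real) list \<Rightarrow> (real \<Rightarrow> real)" where
  "chain_prod C = foldl (\<lambda>f a. a \<circ> f) id C"

definition chain_min :: "(real \<Rightarrow> real) set \<Rightarrow> (real \<Rightarrow> real) list \<Rightarrow> real" where
  "chain_min A C = Min (trans_points A \<inter> (\<Union>a\<in>set C. supt a))"

definition chain_max :: "(real \<Rightarrow> real) set \<Rightarrow> (real \<Rightarrow> real) list \<Rightarrow> real" where
  "chain_max A C = Max (trans_points A \<inter> (\<Union>a\<in>set C. supt a))"

end

theory Submission
  imports Defs
begin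

text \<open>A marking \<open>m\<close> is fast exactly when each marker and its image bracket the transition
  points inside the support, and \<open>m a \<le> b (m b)\<close> whenever \<open>b\<close> immediately precedes \<open>a\<close> in a
  stretched chain: overlapping feet would either trap a transition point or make the two bumps
  consecutive. Pushing \<open>C_min\<close> along a chain \<open>C\<close> then dominates the markers, so the last
  image, and hence \<open>C_min \<Prod>C\<close>, lies above \<open>C_max\<close>.
  Conversely, mark each element of a maximal chain by the image of \<open>C_min\<close> under the product of
  its predecessors. A maximal chain is determined backwards by any of its elements, so this is
  well defined and consecutive markers satisfy \<open>m a = b (m b)\<close>; the inequality for the chain
  keeps these points inside the supports and keeps transition points out of the feet.\<close>

lemma positive_bump_supt:
  assumes "positive_bump a"
  shows "supt a = {left_tp a<..<right_tp a}" and "left_tp a < right_tp a"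
proof -
  obtain x y where "x < y" "supt a = {x<..<y}"
    using assms unfolding positive_bump_def by blast
  then show "supt a = {left_tp a<..<right_tp a}" "left_tp a < right_tp a"
    unfolding left_tp_def right_tp_def by simp_all
qed

lemma positive_bump_moves_up:
  assumes "positive_bump a" "t \<in> supt a"
  shows "t < a t"
  using assms unfolding positive_bump_def by auto

lemma positive_bump_strict_mono:
  assumes "positive_bump a"
  shows "strict_mono a"
proof (rule strict_monoI)
  fix s t :: real
  assume "s < t"
  have bij: "bij_betw a {0..1} {0..1}" and mono: "strict_mono_on {0..1} a"
    and id_outside: "\<And>x. x \<notin> {0..1} \<Longrightarrow> a x = x"
    using assms unfolding positive_bump_def homeo_plus_def by blast+
  have up: "x \<le> a x" for x
    using positive_bump_moves_up[OF assms, of x] unfolding supt_def by fastforce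
  show "a s < a t"
  proof (cases "s \<in> {0..1}")
    case s: True
    show ?thesis
    proof (cases "t \<in> {0..1}")
      case True
      then show ?thesis using s \<open>s < t\<close> mono by (simp add: strict_mono_onD)
    next
      case False
      then show ?thesis
        using \<open>s < t\<close> s id_outside[of t] bij_betw_apply[OF bij s] by auto
    qed
  next
    case False
    then show ?thesis using \<open>s < t\<close> id_outside[of s] up[of t] by simp
  qed
qed

lemma greaterThanLessThan_Int_atLeastLessThan_eq_empty_iff:
  fixes a b c d :: real
  shows "{a<..<b} \<inter> {c..<d} = {} \<longleftrightarrow> min b d \<le> max a c"
proof
  assume empty: "{a<..<b} \<inter> {c..<d} = {}"
  show "min b d \<le> max a c"
  proof (rule ccontr)
    assume "\<not> ?thesis"
    then have "(max a c + min b d) / 2 \<in> {a<..<b} \<inter> {c..<d}" by auto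
    then show False using empty by blast
  qed
qed auto

definition fast_marking :: "(real \<Rightarrow> real) set \<Rightarrow> ((real \<Rightarrow> real) \<Rightarrow> real) \<Rightarrow> bool" where
  "fast_marking A m \<longleftrightarrow> (\<forall>a\<in>A. m a \<in> supt a) \<and>
     (\<forall>a\<in>A. \<forall>b\<in>A.
        left_foot m a \<inter> right_foot m b = {} \<and>
        (a \<noteq> b \<longrightarrow> left_foot m a \<inter> left_foot m b = {}) \<and>
        (a \<noteq> b \<longrightarrow> right_foot m a \<inter> right_foot m b = {}))"

lemma geom_fast_iff_fast_marking:
  "geom_fast A \<longleftrightarrow> geom_proper A \<and> (\<exists>m. fast_marking A m)"
  unfolding geom_fast_def fast_marking_def ..

lemma fast_marking_iff_min_le_max:
  "fast_marking A m \<longleftrightarrow> (\<forall>a\<in>A. m a \<in> supt a) \<and>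
     (\<forall>a\<in>A. \<forall>b\<in>A.
        min (m a) (right_tp b) \<le> max (left_tp a) (b (m b)) \<and>
        (a \<noteq> b \<longrightarrow> min (m a) (m b) \<le> max (left_tp a) (left_tp b)) \<and>
        (a \<noteq> b \<longrightarrow> min (right_tp a) (right_tp b) \<le> max (a (m a)) (b (m b))))"
  unfolding fast_marking_def left_foot_def right_foot_def
  by (auto simp: greaterThanLessThan_Int_atLeastLessThan_eq_empty_iff not_less
      min_le_iff_disj le_max_iff_disj)

locale proper_bump_set =
  fixes A :: "(real \<Rightarrow> real) set"
  assumes finite_bumps: "finite A"
    and positive_bumps: "a \<in> A \<Longrightarrow> positive_bump a"
    and proper: "geom_proper A"
begin

abbreviation TP :: "real set" where
  "TP \<equiv> trans_points A"

lemma finite_trans_points: "finite TP"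
  unfolding trans_points_def using finite_bumps by simp

lemma left_tp_mem: "a \<in> A \<Longrightarrow> left_tp a \<in> TP"
  and right_tp_mem: "a \<in> A \<Longrightarrow> right_tp a \<in> TP"
  unfolding trans_points_def by auto

lemma trans_pointE:
  assumes "p \<in> TP"
  obtains b where "b \<in> A" "p = left_tp b \<or> p = right_tp b"
  using assms unfolding trans_points_def by auto

lemma left_tp_inj: "a \<in> A \<Longrightarrow> b \<in> A \<Longrightarrow> left_tp a = left_tp b \<Longrightarrow> a = b"
  and right_tp_inj: "a \<in> A \<Longrightarrow> b \<in> A \<Longrightarrow> right_tp a = right_tp b \<Longrightarrow> a = b"
  using proper unfolding geom_proper_def by blast+

lemma mem_supt_iff: "a \<in> A \<Longrightarrow> t \<in> supt a \<longleftrightarrow> left_tp a < t \<and> t < right_tp a"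
  using positive_bump_supt(1)[OF positive_bumps] by auto

lemma left_tp_less_right_tp: "a \<in> A \<Longrightarrow> left_tp a < right_tp a"
  using positive_bump_supt(2)[OF positive_bumps] .

lemma moves_up: "a \<in> A \<Longrightarrow> t \<in> supt a \<Longrightarrow> t < a t"
  using positive_bump_moves_up[OF positive_bumps] .

lemma fixes_below_left_tp: "a \<in> A \<Longrightarrow> t \<le> left_tp a \<Longrightarrow> a t = t"
  using mem_supt_iff[of a t] unfolding supt_def by auto

lemma bump_mono: "a \<in> A \<Longrightarrow> s \<le> t \<Longrightarrow> a s \<le> a t"
  using positive_bump_strict_mono[OF positive_bumps] by (metis order_le_less strict_mono_less)

lemma image_less_right_tp:
  assumes a: "a \<in> A" and t: "t \<in> supt a"
  shows "a t < right_tp a"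
proof -
  have "a (right_tp a) = right_tp a"
    using mem_supt_iff[OF a, of "right_tp a"] unfolding supt_def by auto
  then show "a t < right_tp a"
    using positive_bump_strict_mono[OF positive_bumps[OF a]] a t mem_supt_iff
    by (metis strict_mono_less)
qed

definition stretched_step :: "(real \<Rightarrow> real) \<Rightarrow> (real \<Rightarrow> real) \<Rightarrow> bool" where
  "stretched_step b a \<longleftrightarrow> left_tp b < left_tp a \<and> left_tp a < right_tp b \<and>
     right_tp b < right_tp a \<and> TP \<inter> {left_tp a<..<right_tp b} = {}"

lemma stretched_step_not_isolated:
  assumes "a \<in> A" "b \<in> A" "stretched_step b a"
  shows "\<not> isolated A a" and "\<not> isolated A b"
proof -
  have "right_tp b \<in> supt a \<inter> TP" and "left_tp a \<in> supt b \<inter> TP"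
    using assms mem_supt_iff left_tp_mem right_tp_mem unfolding stretched_step_def by auto
  then show "\<not> isolated A a" "\<not> isolated A b"
    unfolding isolated_def by blast+
qed

text \<open>Two predecessors would have distinct right transition points, and the smaller one would
  lie in the gap of the other.\<close>
lemma stretched_step_unique:
  assumes "b \<in> A" "b' \<in> A" "stretched_step b a" "stretched_step b' a"
  shows "b = b'"
proof (rule ccontr)
  assume "b \<noteq> b'"
  then have "right_tp b \<noteq> right_tp b'" using assms right_tp_inj by blast
  then show False
    using assms right_tp_mem unfolding stretched_step_def
    by (metis (no_types, lifting) disjoint_iff greaterThanLessThan_iff linorder_neqE_linordered_idom)
qed

lemma stretched_chain_iff_steps:
  "stretched_chain A C \<longleftrightarrow> C \<noteq> [] \<and> (\<forall>a\<in>set C. a \<in> A \<and> \<not> isolated A a) \<and>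
     (\<forall>i. Suc i < length C \<longrightarrow> stretched_step (C!i) (C!Suc i))"
  unfolding stretched_chain_def stretched_step_def ..

lemma chain_length_pos: "stretched_chain A C \<Longrightarrow> 0 < length C"
  unfolding stretched_chain_def by simp

lemma max_chain_stretched: "max_stretched_chain A C \<Longrightarrow> stretched_chain A C"
  unfolding max_stretched_chain_def by blast

lemma chain_nth_mem: "stretched_chain A C \<Longrightarrow> i < length C \<Longrightarrow> C!i \<in> A"
  unfolding stretched_chain_def by auto

lemma chain_step: "stretched_chain A C \<Longrightarrow> Suc i < length C \<Longrightarrow> stretched_step (C!i) (C!Suc i)"
  unfolding stretched_chain_iff_steps by blast

lemma chain_tps_mono:
  assumes C: "stretched_chain A C" and "i \<le> j" "j < length C"
  shows "left_tp (C!i) \<le> left_tp (C!j)" and "right_tp (C!i) \<le> right_tp (C!j)"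
proof -
  have step: "n \<in> {n. Suc n < length C} \<Longrightarrow>
      left_tp (C!n) \<le> left_tp (C!Suc n) \<and> right_tp (C!n) \<le> right_tp (C!Suc n)" for n
    using chain_step[OF C, of n] unfolding stretched_step_def by auto
  show "left_tp (C!i) \<le> left_tp (C!j)"
    by (rule lift_Suc_mono_le_ivl[where N = "{n. Suc n < length C}"]) (use step assms in auto)
  show "right_tp (C!i) \<le> right_tp (C!j)"
    by (rule lift_Suc_mono_le_ivl[where N = "{n. Suc n < length C}"]) (use step assms in auto)
qed

definition brackets_trans_points :: "((real \<Rightarrow> real) \<Rightarrow> real) \<Rightarrow> bool" where
  "brackets_trans_points m \<longleftrightarrow>
     (\<forall>a\<in>A. m a \<in> supt a \<and> (\<forall>p\<in>TP \<inter> supt a. m a \<le> p \<and> p \<le> a (m a)))"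

definition step_compatible :: "((real \<Rightarrow> real) \<Rightarrow> real) \<Rightarrow> bool" where
  "step_compatible m \<longleftrightarrow> (\<forall>a\<in>A. \<forall>b\<in>A. stretched_step b a \<longrightarrow> m a \<le> b (m b))"

lemma brackets_trans_pointsD:
  assumes "brackets_trans_points m" "a \<in> A"
  shows "left_tp a < m a" "m a < a (m a)" "a (m a) < right_tp a"
    and "p \<in> TP \<Longrightarrow> left_tp a < p \<Longrightarrow> p < right_tp a \<Longrightarrow> m a \<le> p \<and> p \<le> a (m a)"
  using assms mem_supt_iff moves_up image_less_right_tp
  unfolding brackets_trans_points_def by auto

lemma fast_marking_brackets_trans_points:
  assumes fast: "fast_marking A m"
  shows "brackets_trans_points m"
  unfolding brackets_trans_points_def
proof (intro ballI conjI)
  fix a assume a: "a \<in> A"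
  show ma: "m a \<in> supt a" using fast a unfolding fast_marking_def by blast
  fix p assume p: "p \<in> TP \<inter> supt a"
  then obtain b where b: "b \<in> A" "p = left_tp b \<or> p = right_tp b"
    using trans_pointE by blast
  have mb: "m b \<in> supt b" using fast b unfolding fast_marking_def by blast
  have "a \<noteq> b" using p b mem_supt_iff[OF a] by auto
  then have "min (m a) (right_tp b) \<le> max (left_tp a) (b (m b))"
    "min (m b) (right_tp a) \<le> max (left_tp b) (a (m a))"
    "min (m a) (m b) \<le> max (left_tp a) (left_tp b)"
    "min (right_tp a) (right_tp b) \<le> max (a (m a)) (b (m b))"
    using fast a b unfolding fast_marking_iff_min_le_max by blast+
  moreover have "left_tp a < p" "p < right_tp a" using p mem_supt_iff[OF a] by auto
  moreover have "left_tp a < m a" "m a < a (m a)" "a (m a) < right_tp a"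
    using ma a mem_supt_iff moves_up image_less_right_tp by auto
  moreover have "left_tp b < m b" "m b < b (m b)" "b (m b) < right_tp b"
    using mb b mem_supt_iff moves_up image_less_right_tp by auto
  ultimately show "m a \<le> p" "p \<le> a (m a)"
    using b(2) by (auto simp: min_def max_def split: if_splits)
qed

lemma fast_marking_step_compatible:
  assumes fast: "fast_marking A m"
  shows "step_compatible m"
  unfolding step_compatible_def
proof (intro ballI impI)
  fix a b assume a: "a \<in> A" and b: "b \<in> A" and step: "stretched_step b a"
  have "left_tp a \<le> b (m b)" "m a \<le> right_tp b"
    using brackets_trans_pointsD(4)[OF fast_marking_brackets_trans_points[OF fast]]
      a b step left_tp_mem right_tp_mem unfolding stretched_step_def by auto
  moreover have "min (m a) (right_tp b) \<le> max (left_tp a) (b (m b))"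
    using fast a b unfolding fast_marking_iff_min_le_max by blast
  ultimately show "m a \<le> b (m b)" by linarith
qed

text \<open>A left foot of \<open>a\<close> meeting a right foot of \<open>b\<close> forces \<open>b, a\<close> to be a stretched step,
  which step compatibility rules out.\<close>
lemma fast_marking_if_brackets_step_compatible:
  assumes brackets: "brackets_trans_points m" and compatible: "step_compatible m"
  shows "fast_marking A m"
  unfolding fast_marking_iff_min_le_max
proof (intro conjI ballI impI)
  note bounds = brackets_trans_pointsD[OF brackets]
  fix a assume a: "a \<in> A"
  show "m a \<in> supt a" using brackets a unfolding brackets_trans_points_def by blast
  fix b assume b: "b \<in> A"
  show "min (m a) (right_tp b) \<le> max (left_tp a) (b (m b))"
  proof (rule ccontr)
    assume overlap: "\<not> ?thesis"
    have "a \<noteq> b" using overlap bounds(1-3)[OF a] by auto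
    then have lefts: "left_tp a \<noteq> left_tp b" and rights: "right_tp a \<noteq> right_tp b"
      using a b left_tp_inj right_tp_inj by blast+
    have "left_tp b < left_tp a"
      using lefts overlap bounds(1-3)[OF b] bounds(1-3)[OF a]
        bounds(4)[OF a left_tp_mem[OF b]] by force
    moreover have "right_tp b < right_tp a"
      using rights overlap bounds(1-3)[OF b] bounds(1-3)[OF a]
        bounds(4)[OF b right_tp_mem[OF a]] by force
    moreover have "TP \<inter> {left_tp a<..<right_tp b} = {}"
    proof (rule ccontr)
      assume "\<not> ?thesis"
      then obtain p where "p \<in> TP" "left_tp a < p" "p < right_tp b" by auto
      then show False
        using \<open>left_tp b < left_tp a\<close> \<open>right_tp b < right_tp a\<close> overlap
          bounds(4)[OF a, of p] bounds(4)[OF b, of p] by force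
    qed
    ultimately have "stretched_step b a"
      using overlap unfolding stretched_step_def by auto
    then show False using compatible a b overlap unfolding step_compatible_def by force
  qed
  assume "a \<noteq> b"
  then have lefts: "left_tp a \<noteq> left_tp b" and rights: "right_tp a \<noteq> right_tp b"
    using a b left_tp_inj right_tp_inj by blast+
  show "min (m a) (m b) \<le> max (left_tp a) (left_tp b)"
    using lefts bounds(1-3)[OF a] bounds(1-3)[OF b]
      bounds(4)[OF a left_tp_mem[OF b]] bounds(4)[OF b left_tp_mem[OF a]]
    by linarith
  show "min (right_tp a) (right_tp b) \<le> max (a (m a)) (b (m b))"
    using rights bounds(1-3)[OF a] bounds(1-3)[OF b]
      bounds(4)[OF a right_tp_mem[OF b]] bounds(4)[OF b right_tp_mem[OF a]]
    by linarith
qed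

lemma fast_marking_iff_brackets_step_compatible:
  "fast_marking A m \<longleftrightarrow> brackets_trans_points m \<and> step_compatible m"
  using fast_marking_brackets_trans_points fast_marking_step_compatible
    fast_marking_if_brackets_step_compatible by blast

lemma chain_trans_points:
  assumes C: "stretched_chain A C"
  defines "S \<equiv> TP \<inter> (\<Union>a\<in>set C. supt a)"
  shows "finite S" "S \<noteq> {}" "p \<in> S \<longleftrightarrow> p \<in> TP \<and> (\<exists>i<length C. p \<in> supt (C!i))"
proof -
  show "finite S" unfolding S_def using finite_trans_points by blast
  show "p \<in> S \<longleftrightarrow> p \<in> TP \<and> (\<exists>i<length C. p \<in> supt (C!i))"
    unfolding S_def by (auto simp: in_set_conv_nth) (use nth_mem in blast)
  have "C!0 \<in> set C" "\<not> isolated A (C!0)"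
    using C chain_length_pos[OF C] unfolding stretched_chain_def by auto
  then show "S \<noteq> {}" unfolding S_def isolated_def by blast
qed

lemma chain_min_le:
  "stretched_chain A C \<Longrightarrow> i < length C \<Longrightarrow> p \<in> TP \<inter> supt (C!i) \<Longrightarrow> chain_min A C \<le> p"
  unfolding chain_min_def by (intro Min_le chain_trans_points(1)) (auto simp: chain_trans_points(3))

lemma chain_max_ge:
  "stretched_chain A C \<Longrightarrow> i < length C \<Longrightarrow> p \<in> TP \<inter> supt (C!i) \<Longrightarrow> p \<le> chain_max A C"
  unfolding chain_max_def by (intro Max_ge chain_trans_points(1)) (auto simp: chain_trans_points(3))

text \<open>Every later support lies above \<open>left_tp (C!1)\<close>, itself a transition point in the
  first support.\<close>
lemma chain_min_mem_first_supt:
  assumes C: "stretched_chain A C"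
  shows "chain_min A C \<in> TP \<inter> supt (C!0)"
proof -
  obtain i where i: "i < length C" "chain_min A C \<in> TP \<inter> supt (C!i)"
    using Min_in[OF chain_trans_points(1,2)[OF C]] chain_trans_points(3)[OF C]
    unfolding chain_min_def by blast
  have "i = 0"
  proof (rule ccontr)
    assume "i \<noteq> 0"
    then have len: "1 < length C" and pos: "0 < length C" using i by linarith+
    have "stretched_step (C!0) (C!1)" using chain_step[OF C, of 0] len by simp
    moreover have "C!0 \<in> A" "C!1 \<in> A" using chain_nth_mem[OF C] len pos by simp_all
    ultimately have "left_tp (C!1) \<in> TP \<inter> supt (C!0)"
      using left_tp_mem mem_supt_iff unfolding stretched_step_def by auto
    then have "chain_min A C \<le> left_tp (C!1)" using chain_min_le[OF C pos] by simp
    moreover have "left_tp (C!1) \<le> left_tp (C!i)"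
      using chain_tps_mono(1)[OF C, of 1 i] i \<open>i \<noteq> 0\<close> by simp
    ultimately show False using i chain_nth_mem[OF C] mem_supt_iff by fastforce
  qed
  then show ?thesis using i by simp
qed

lemma chain_max_mem_last_supt:
  assumes C: "stretched_chain A C"
  shows "chain_max A C \<in> TP \<inter> supt (C!(length C - 1))"
proof -
  define k where "k = length C - 1"
  have k: "k < length C" using chain_length_pos[OF C] unfolding k_def by simp
  obtain i where i: "i < length C" "chain_max A C \<in> TP \<inter> supt (C!i)"
    using Max_in[OF chain_trans_points(1,2)[OF C]] chain_trans_points(3)[OF C]
    unfolding chain_max_def by blast
  have "i = k"
  proof (rule ccontr)
    assume "i \<noteq> k"
    define j where "j = k - 1"
    have j: "k = Suc j" "i \<le> j" using i \<open>i \<noteq> k\<close> unfolding j_def k_def by auto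
    then have "stretched_step (C!j) (C!k)" using chain_step[OF C, of j] k by simp
    then have "right_tp (C!j) \<in> TP \<inter> supt (C!k)"
      using chain_nth_mem[OF C] k j right_tp_mem mem_supt_iff
      unfolding stretched_step_def by auto
    then have "right_tp (C!j) \<le> chain_max A C" using chain_max_ge[OF C k] by simp
    moreover have "right_tp (C!i) \<le> right_tp (C!j)"
      using chain_tps_mono(2)[OF C, of i j] j k by simp
    ultimately show False using i chain_nth_mem[OF C] mem_supt_iff by fastforce
  qed
  then show ?thesis using i k_def by simp
qed

definition chain_marker :: "(real \<Rightarrow> real) list \<Rightarrow> nat \<Rightarrow> real" where
  "chain_marker C i = chain_prod (take i C) (chain_min A C)"

lemma chain_marker_0: "chain_marker C 0 = chain_min A C"
  unfolding chain_marker_def chain_prod_def by simp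

lemma chain_marker_Suc: "i < length C \<Longrightarrow> chain_marker C (Suc i) = (C!i) (chain_marker C i)"
  unfolding chain_marker_def chain_prod_def by (simp add: take_Suc_conv_app_nth)

lemma chain_marker_length: "chain_marker C (length C) = chain_prod C (chain_min A C)"
  unfolding chain_marker_def by simp

lemma marker_le_chain_marker:
  assumes brackets: "brackets_trans_points m" and compatible: "step_compatible m"
    and C: "stretched_chain A C"
  shows "i < length C \<Longrightarrow> m (C!i) \<le> chain_marker C i"
proof (induction i)
  case 0
  then show ?case
    using chain_min_mem_first_supt[OF C] chain_nth_mem[OF C] brackets
    unfolding brackets_trans_points_def chain_marker_0 by blast
next
  case (Suc i)
  have "m (C!Suc i) \<le> (C!i) (m (C!i))"
    using compatible chain_step[OF C Suc.prems] chain_nth_mem[OF C] Suc.prems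
    unfolding step_compatible_def by simp
  also have "\<dots> \<le> (C!i) (chain_marker C i)"
    using bump_mono chain_nth_mem[OF C] Suc by simp
  also have "\<dots> = chain_marker C (Suc i)"
    using chain_marker_Suc Suc.prems by simp
  finally show ?case .
qed

lemma chain_max_le_prod_if_brackets_step_compatible:
  assumes brackets: "brackets_trans_points m" and compatible: "step_compatible m"
    and C: "stretched_chain A C"
  shows "chain_max A C \<le> chain_prod C (chain_min A C)"
proof -
  define k where "k = length C - 1"
  have k: "k < length C" "Suc k = length C" using chain_length_pos[OF C] unfolding k_def by auto
  have "chain_max A C \<le> (C!k) (m (C!k))"
    using chain_max_mem_last_supt[OF C] chain_nth_mem[OF C k(1)] brackets
    unfolding brackets_trans_points_def k_def by blast
  also have "\<dots> \<le> (C!k) (chain_marker C k)"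
    using bump_mono chain_nth_mem[OF C] marker_le_chain_marker[OF assms k(1)] k by simp
  also have "\<dots> = chain_prod C (chain_min A C)"
    using chain_marker_Suc[OF k(1)] chain_marker_length k(2) by simp
  finally show ?thesis .
qed

lemma chain_marker_stays:
  assumes C: "stretched_chain A C" and j: "j < length C"
    and below: "chain_marker C j \<le> left_tp (C!j)"
  shows "j \<le> k \<Longrightarrow> k \<le> length C \<Longrightarrow> chain_marker C k = chain_marker C j"
proof (induction k rule: dec_induct)
  case (step k)
  then have "C!k \<in> A" "left_tp (C!j) \<le> left_tp (C!k)"
    using chain_nth_mem[OF C] chain_tps_mono(1)[OF C] by auto
  then have "(C!k) (chain_marker C j) = chain_marker C j"
    using fixes_below_left_tp below by simp
  then show ?case using chain_marker_Suc step by simp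
qed simp

context
  fixes C :: "(real \<Rightarrow> real) list"
  assumes C: "stretched_chain A C"
    and bound: "chain_max A C \<le> chain_prod C (chain_min A C)"
begin

text \<open>If some marker fell to the left of its support it would never move again, so the product
  would stay below \<open>right_tp (C!j)\<close>, a transition point of the chain.\<close>
lemma left_tp_less_chain_marker:
  assumes j: "Suc j < length C"
  shows "left_tp (C!Suc j) < chain_marker C (Suc j)"
proof (rule ccontr)
  assume below: "\<not> ?thesis"
  then have "chain_marker C (length C) = chain_marker C (Suc j)"
    using chain_marker_stays[OF C j, of "length C"] j by linarith
  moreover have step: "stretched_step (C!j) (C!Suc j)" using chain_step[OF C j] .
  then have "right_tp (C!j) \<le> chain_max A C"
    using chain_max_ge[OF C j] chain_nth_mem[OF C] j right_tp_mem mem_supt_iff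
    unfolding stretched_step_def by auto
  ultimately show False
    using bound step below chain_marker_length unfolding stretched_step_def by auto
qed

lemma chain_marker_mem_supt: "i < length C \<Longrightarrow> chain_marker C i \<in> supt (C!i)"
proof (induction i)
  case 0
  then show ?case using chain_min_mem_first_supt[OF C] chain_marker_0 by simp
next
  case (Suc i)
  then have "(C!i) (chain_marker C i) < right_tp (C!i)"
    using image_less_right_tp chain_nth_mem[OF C] by simp
  moreover have "right_tp (C!i) < right_tp (C!Suc i)"
    using chain_step[OF C Suc.prems] unfolding stretched_step_def by simp
  ultimately show ?case
    using left_tp_less_chain_marker[OF Suc.prems] chain_marker_Suc Suc.prems
      mem_supt_iff chain_nth_mem[OF C] by simp
qed

lemma chain_marker_brackets:
  assumes i: "i < length C" and p: "p \<in> TP \<inter> supt (C!i)"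
  shows "chain_marker C i \<le> p" and "p \<le> (C!i) (chain_marker C i)"
proof -
  have Ci: "C!i \<in> A" using chain_nth_mem[OF C i] .
  show "chain_marker C i \<le> p"
  proof (cases i)
    case 0
    then show ?thesis using chain_min_le[OF C i p] chain_marker_0 by simp
  next
    case (Suc h)
    then have "chain_marker C i < right_tp (C!h)"
      using image_less_right_tp chain_marker_mem_supt chain_marker_Suc chain_nth_mem[OF C] i
      by simp
    moreover have "\<not> p < right_tp (C!h)"
      using chain_step[OF C, of h] Suc i p mem_supt_iff[OF Ci]
      unfolding stretched_step_def by auto
    ultimately show ?thesis by simp
  qed
  show "p \<le> (C!i) (chain_marker C i)"
  proof (cases "Suc i < length C")
    case True
    have "\<not> left_tp (C!Suc i) < p"
      using chain_step[OF C True] p mem_supt_iff[OF Ci] unfolding stretched_step_def by auto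
    then show ?thesis
      using left_tp_less_chain_marker[OF True] chain_marker_Suc[OF i] by simp
  next
    case False
    then have "Suc i = length C" using i by simp
    then have "(C!i) (chain_marker C i) = chain_prod C (chain_min A C)"
      using chain_marker_Suc[OF i] chain_marker_length by metis
    then show ?thesis using chain_max_ge[OF C i p] bound by simp
  qed
qed

end

lemma stretched_chain_Cons:
  assumes D: "stretched_chain A D" and b: "b \<in> A" and step: "stretched_step b (D!0)"
  shows "stretched_chain A (b # D)"
proof -
  have "D!0 \<in> A" using chain_nth_mem[OF D chain_length_pos[OF D]] .
  then have "\<not> isolated A b" using stretched_step_not_isolated(2) b step by blast
  moreover have "stretched_step ((b # D)!i) ((b # D)!Suc i)" if "Suc i < length (b # D)" for i
    using that step chain_step[OF D] by (cases i) auto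
  ultimately show ?thesis using D b unfolding stretched_chain_iff_steps by auto
qed

lemma max_chain_first_no_step:
  assumes D: "max_stretched_chain A D" and b: "b \<in> A"
  shows "\<not> stretched_step b (D!0)"
proof
  assume step: "stretched_step b (D!0)"
  have Ds: "stretched_chain A D" using max_chain_stretched[OF D(1)] .
  have "set (b # D) = set D"
    using D stretched_chain_Cons[OF Ds b step] unfolding max_stretched_chain_def
    by (metis set_subset_Cons)
  then obtain j where j: "j < length D" "D!j = b" by (metis in_set_conv_nth list.set_intros(1))
  then have "left_tp (D!0) \<le> left_tp b" using chain_tps_mono(1)[OF Ds, of 0 j] by simp
  then show False using step unfolding stretched_step_def by simp
qed

lemma max_chains_agree:
  assumes D: "max_stretched_chain A D" and D': "max_stretched_chain A D'"
  shows "i < length D \<Longrightarrow> j < length D' \<Longrightarrow> D!i = D'!j \<Longrightarrow>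
    i = j \<and> take (Suc i) D = take (Suc j) D'"
proof (induction i arbitrary: j)
  have Ds: "stretched_chain A D" and Ds': "stretched_chain A D'"
    using max_chain_stretched D D' by blast+
  {
    case 0
    have "j = 0"
    proof (rule ccontr)
      assume "j \<noteq> 0"
      then obtain h where "j = Suc h" by (cases j) auto
      then show False
        using max_chain_first_no_step[OF D] chain_step[OF Ds'] chain_nth_mem[OF Ds'] 0 by fastforce
    qed
    then show ?case using 0 by (simp add: take_Suc_conv_app_nth)
  next
    case (Suc i)
    have "j \<noteq> 0"
    proof
      assume "j = 0"
      then have "stretched_step (D!i) (D'!0)"
        using chain_step[OF Ds Suc.prems(1)] Suc.prems(3) by simp
      moreover have "D!i \<in> A" using chain_nth_mem[OF Ds] Suc.prems(1) by simp
      ultimately show False using max_chain_first_no_step[OF D'] by blast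
    qed
    then obtain h where h: "j = Suc h" using not0_implies_Suc by blast
    have "stretched_step (D!i) (D!Suc i)" "stretched_step (D'!h) (D!Suc i)"
      using chain_step[OF Ds Suc.prems(1)] chain_step[OF Ds', of h] Suc.prems h by simp_all
    moreover have "D!i \<in> A" "D'!h \<in> A"
      using chain_nth_mem[OF Ds] chain_nth_mem[OF Ds'] Suc.prems h by simp_all
    ultimately have "D!i = D'!h" using stretched_step_unique by blast
    then have "i = h" and prefix: "take (Suc i) D = take (Suc h) D'"
      using Suc.IH[of h] Suc.prems h by auto
    moreover have "take (Suc (Suc i)) D = take (Suc i) D @ [D!Suc i]"
      and "take (Suc j) D' = take (Suc h) D' @ [D'!j]"
      using Suc.prems h take_Suc_conv_app_nth by blast+
    ultimately show ?case using Suc.prems h by simp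
  }
qed

lemma chain_min_cong:
  assumes D: "stretched_chain A D" and D': "stretched_chain A D'" and "D!0 = D'!0"
  shows "chain_min A D = chain_min A D'"
proof (rule order_antisym)
  show "chain_min A D \<le> chain_min A D'"
    using chain_min_le[OF D chain_length_pos[OF D]] chain_min_mem_first_supt[OF D'] assms(3)
    by simp
  show "chain_min A D' \<le> chain_min A D"
    using chain_min_le[OF D' chain_length_pos[OF D']] chain_min_mem_first_supt[OF D] assms(3)
    by simp
qed

lemma chain_marker_cong:
  assumes D: "stretched_chain A D" and D': "stretched_chain A D'"
    and i: "i < length D" and prefix: "take (Suc i) D = take (Suc i) D'"
  shows "chain_marker D i = chain_marker D' i"
proof -
  have "take i D = take i D'" using arg_cong[OF prefix, of "take i"] by simp
  moreover have "D!0 = D'!0" using arg_cong[OF prefix, of "\<lambda>L. L!0"] by simp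
  ultimately show ?thesis
    using chain_min_cong[OF D D'] unfolding chain_marker_def by simp
qed

lemma exists_max_chain:
  assumes a: "a \<in> A" "\<not> isolated A a"
  obtains D where "max_stretched_chain A D" "a \<in> set D"
proof -
  define F where "F = {set D | D. stretched_chain A D \<and> a \<in> set D}"
  have "F \<subseteq> Pow A" unfolding F_def stretched_chain_def by auto
  then have "finite F" using finite_bumps by (simp add: finite_subset)
  moreover have "stretched_chain A [a]" using a unfolding stretched_chain_def by simp
  then have "F \<noteq> {}" unfolding F_def by auto
  ultimately obtain M where "M \<in> F" and maximal: "\<And>N. N \<in> F \<Longrightarrow> M \<subseteq> N \<Longrightarrow> M = N"
    using finite_has_maximal[of F] by blast
  then obtain D where D: "stretched_chain A D" "a \<in> set D" "M = set D" unfolding F_def by blast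
  have "max_stretched_chain A D"
    unfolding max_stretched_chain_def
  proof (intro conjI allI impI)
    fix D' assume "stretched_chain A D' \<and> set D \<subseteq> set D'"
    then have "set D' \<in> F" "M \<subseteq> set D'" using D unfolding F_def by auto
    then show "set D' = set D" using maximal D(3) by blast
  qed (use D in blast)
  then show ?thesis using that D by blast
qed

text \<open>A nonisolated bump is marked by its \<open>chain_marker\<close> in any maximal chain through it;
  \<open>max_chains_agree\<close> makes this independent of the chosen chain. Isolated bumps may be marked
  anywhere in their support.\<close>
definition chain_marking :: "(real \<Rightarrow> real) \<Rightarrow> real" where
  "chain_marking a = (if isolated A a then (left_tp a + right_tp a) / 2
     else (SOME t. \<exists>D i. max_stretched_chain A D \<and> i < length D \<and> D!i = a \<and> t = chain_marker D i))"

lemma chain_marking_eq: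
  assumes D: "max_stretched_chain A D" and i: "i < length D"
  shows "chain_marking (D!i) = chain_marker D i"
proof -
  have Ds: "stretched_chain A D" using max_chain_stretched[OF D(1)] .
  then have "\<not> isolated A (D!i)" using i nth_mem unfolding stretched_chain_def by blast
  moreover obtain D' j where D': "max_stretched_chain A D'" "j < length D'" "D'!j = D!i"
    and "(SOME t. \<exists>D' j. max_stretched_chain A D' \<and> j < length D' \<and> D'!j = D!i \<and>
           t = chain_marker D' j) = chain_marker D' j"
    using someI_ex[of "\<lambda>t. \<exists>D' j. max_stretched_chain A D' \<and> j < length D' \<and> D'!j = D!i \<and>
           t = chain_marker D' j"] D i by blast
  moreover have "i = j" "take (Suc i) D = take (Suc i) D'"
    using max_chains_agree[OF D D'(1) i D'(2) D'(3)[symmetric]] by auto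
  moreover have "stretched_chain A D'" using max_chain_stretched[OF D'(1)] .
  ultimately show ?thesis
    using chain_marker_cong[OF Ds _ i] unfolding chain_marking_def by simp
qed

lemma chain_marking_step_compatible: "step_compatible chain_marking"
  unfolding step_compatible_def
proof (intro ballI impI)
  fix a b assume a: "a \<in> A" and b: "b \<in> A" and step: "stretched_step b a"
  obtain D where D: "max_stretched_chain A D" "a \<in> set D"
    using exists_max_chain stretched_step_not_isolated(1)[OF a b step] a by blast
  then obtain i where i: "i < length D" "D!i = a" by (auto simp: in_set_conv_nth)
  have Ds: "stretched_chain A D" using max_chain_stretched[OF D(1)] .
  have "i \<noteq> 0" using max_chain_first_no_step[OF D(1) b] step i by (cases i) auto
  then obtain h where h: "i = Suc h" using not0_implies_Suc by blast
  then have "stretched_step (D!h) a" "D!h \<in> A"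
    using chain_step[OF Ds, of h] chain_nth_mem[OF Ds, of h] i by simp_all
  then have "D!h = b" using stretched_step_unique b step by blast
  then have "chain_marking a = b (chain_marking b)"
    using chain_marking_eq[OF D(1)] chain_marker_Suc i h by (metis Suc_lessD)
  then show "chain_marking a \<le> b (chain_marking b)" by simp
qed

lemma chain_marking_brackets:
  assumes bound: "\<And>C. max_stretched_chain A C \<Longrightarrow> chain_max A C \<le> chain_prod C (chain_min A C)"
  shows "brackets_trans_points chain_marking"
  unfolding brackets_trans_points_def
proof (intro ballI)
  fix a assume a: "a \<in> A"
  show "chain_marking a \<in> supt a \<and>
    (\<forall>p\<in>TP \<inter> supt a. chain_marking a \<le> p \<and> p \<le> a (chain_marking a))"
  proof (cases "isolated A a")
    case True
    then show ?thesis
      using left_tp_less_right_tp[OF a] mem_supt_iff[OF a]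
      unfolding chain_marking_def isolated_def by auto
  next
    case False
    then obtain D where D: "max_stretched_chain A D" "a \<in> set D" using exists_max_chain a by blast
    then obtain i where i: "i < length D" "D!i = a" by (auto simp: in_set_conv_nth)
    have Ds: "stretched_chain A D" using max_chain_stretched[OF D(1)] .
    show ?thesis
      using chain_marker_mem_supt[OF Ds bound[OF D(1)] i(1)]
        chain_marker_brackets[OF Ds bound[OF D(1)] i(1)] chain_marking_eq[OF D(1) i(1)] i(2)
      by auto
  qed
qed

end

theorem proposition4p2:
  fixes A :: "(real \<Rightarrow> real) set"
  assumes "finite A"
    and "\<forall>a\<in>A. positive_bump a"
    and "geom_proper A"
  shows "(geom_fast A \<longleftrightarrow>
            (\<forall>C. stretched_chain A C \<longrightarrow> chain_max A C \<le> chain_prod C (chain_min A C)))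
       \<and> (geom_fast A \<longleftrightarrow>
            (\<forall>C. max_stretched_chain A C \<longrightarrow> chain_max A C \<le> chain_prod C (chain_min A C)))"
proof -
  interpret proper_bump_set A using assms by unfold_locales auto
  have fast_chains: "\<forall>C. stretched_chain A C \<longrightarrow> chain_max A C \<le> chain_prod C (chain_min A C)"
    if "geom_fast A"
    using that chain_max_le_prod_if_brackets_step_compatible
    unfolding geom_fast_iff_fast_marking fast_marking_iff_brackets_step_compatible by blast
  have max_chains_fast: "geom_fast A"
    if "\<forall>C. max_stretched_chain A C \<longrightarrow> chain_max A C \<le> chain_prod C (chain_min A C)"
    using that chain_marking_brackets chain_marking_step_compatible assms(3)
    unfolding geom_fast_iff_fast_marking fast_marking_iff_brackets_step_compatible by blast
  show ?thesis
    using fast_chains max_chains_fast unfolding max_stretched_chain_def by blast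
qed

end
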